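(* Let $\lambda>0$ and let $A\in\mathbb{R}^{3\times3}$ with $\det A>0$, whose singular values satisfy $\lambda_1\le\lambda_2\le\lambda_3$. Let $\alpha=\lambda_2\lambda_3-\lambda\lambda_1$, $\beta=\lambda_1\lambda_3-\lambda\lambda_2$, $\gamma=\lambda_1\lambda_2-\lambda\lambda_3$. Then there is $R\in SO(3)$ such that $$G(A)=(1-R_{11})\alpha+(1-R_{22})\beta+(1-R_{33})\gamma.$$
   Context: Singular values of $A$ are the square roots of the eigenvalues of $A^TA$. $P(A)=\sum_{1\le i<j\le3}\lambda_i(A)\lambda_j(A)-\lambda\sum_i\lambda_i(A)$, $N(A)=\operatorname{tr}\operatorname{cof}A-\lambda\operatorname{tr}A$ (cof the cofactor matrix), and $G(A)=P(A)-N(A)$. *)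

theory Defs
  imports "HOL-Analysis.Analysis"
begin

text \<open>Cofactor matrix: entry (i,j) is the determinant of A with row i replaced by the
  j-th unit row vector, i.e. (-1)^(i+j) times the (i,j) minor.\<close>
definition cof :: "real^'n^'n \<Rightarrow> real^'n^'n" where
  "cof A = (\<chi> i j. det (\<chi> k l. if k = i then (if l = j then 1 else 0) else A $ k $ l))"

text \<open>l1, l2, l3 are the singular values of A (with multiplicity), i.e. nonnegative
  square roots of the eigenvalues of A^T A counted with algebraic multiplicity.\<close>
definition singular_values3 :: "real^3^3 \<Rightarrow> real \<Rightarrow> real \<Rightarrow> real \<Rightarrow> bool" where
  "singular_values3 A l1 l2 l3 \<longleftrightarrow> 0 \<le> l1 \<and> 0 \<le> l2 \<and> 0 \<le> l3 \<and>
     (\<forall>t::real. det (t *\<^sub>R mat 1 - transpose A ** A) = (t - l1\<^sup>2) * (t - l2\<^sup>2) * (t - l3\<^sup>2))"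

definition Pfun :: "real \<Rightarrow> real \<Rightarrow> real \<Rightarrow> real \<Rightarrow> real" where
  "Pfun lam l1 l2 l3 = (l1 * l2 + l1 * l3 + l2 * l3) - lam * (l1 + l2 + l3)"

definition Nfun :: "real \<Rightarrow> real^'n^'n \<Rightarrow> real" where
  "Nfun lam A = trace (cof A) - lam * trace A"

definition Gfun :: "real \<Rightarrow> real^3^3 \<Rightarrow> real \<Rightarrow> real \<Rightarrow> real \<Rightarrow> real" where
  "Gfun lam A l1 l2 l3 = Pfun lam l1 l2 l3 - Nfun lam A"

end

theory Submission imports Defs begin

text \<open>Write \<open>A = U D V\<^sup>T\<close> with \<open>U, V \<in> SO(3)\<close> and \<open>D = diag(\<lambda>\<^sub>1, \<lambda>\<^sub>2, \<lambda>\<^sub>3)\<close>.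
  Then \<open>cof A = U diag(\<lambda>\<^sub>2\<lambda>\<^sub>3, \<lambda>\<^sub>1\<lambda>\<^sub>3, \<lambda>\<^sub>1\<lambda>\<^sub>2) V\<^sup>T\<close>, and with \<open>R = V\<^sup>T U \<in> SO(3)\<close>
  the invariance of the trace under cyclic permutation gives
  \<open>tr A = \<Sum> \<lambda>\<^sub>i R\<^sub>i\<^sub>i\<close> and \<open>tr cof A = \<lambda>\<^sub>2\<lambda>\<^sub>3 R\<^sub>1\<^sub>1 + \<lambda>\<^sub>1\<lambda>\<^sub>3 R\<^sub>2\<^sub>2 + \<lambda>\<^sub>1\<lambda>\<^sub>2 R\<^sub>3\<^sub>3\<close>; the
  identity is then linear algebra in the diagonal entries of \<open>R\<close>. The decomposition itself
  comes from diagonalising \<open>A\<^sup>T A\<close> by successively maximising its Rayleigh quotient on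
  invariant subspaces.\<close>

lemma symmetric_matrix_inner_commute:
  fixes M :: "real^'n^'n"
  assumes "transpose M = M"
  shows "(M *v x) \<bullet> y = x \<bullet> (M *v y)"
  by (metis assms dot_lmul_matrix transpose_matrix_vector)

lemma quadratic_form_attains_max_on_unit_sphere:
  fixes M :: "real^'n^'n"
  assumes sub: "subspace S" and x0: "x0 \<in> S" "x0 \<noteq> 0"
  obtains v where "v \<in> S" "norm v = 1" "\<forall>x\<in>S. norm x = 1 \<longrightarrow> x \<bullet> (M *v x) \<le> v \<bullet> (M *v v)"
proof -
  let ?K = "S \<inter> sphere 0 1"
  have "compact ?K"
    using closed_subspace[OF sub] compact_sphere by (simp add: closed_Int_compact)
  moreover have "(1 / norm x0) *\<^sub>R x0 \<in> ?K"
    using x0 sub by (simp add: subspace_scale)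
  then have "?K \<noteq> {}" by blast
  moreover have "continuous_on ?K (\<lambda>x. x \<bullet> (M *v x))"
    by (intro continuous_intros)
  ultimately obtain v where "v \<in> ?K" "\<forall>x\<in>?K. x \<bullet> (M *v x) \<le> v \<bullet> (M *v v)"
    using continuous_attains_sup by blast
  then show thesis using that by auto
qed

lemma quadratic_form_le_max_on_subspace:
  fixes M :: "real^'n^'n"
  assumes sub: "subspace S" and x: "x \<in> S"
    and max: "\<forall>y\<in>S. norm y = 1 \<longrightarrow> y \<bullet> (M *v y) \<le> \<mu>"
  shows "x \<bullet> (M *v x) \<le> \<mu> * (x \<bullet> x)"
proof (cases "x = 0")
  case False
  define y where "y = (1 / norm x) *\<^sub>R x"
  have nx: "norm x > 0" using False by simp
  have "y \<in> S" "norm y = 1" unfolding y_def using x nx sub by (auto simp: subspace_scale)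
  then have "y \<bullet> (M *v y) \<le> \<mu>" using max by blast
  moreover have "y \<bullet> (M *v y) = (x \<bullet> (M *v x)) / (x \<bullet> x)"
    unfolding y_def by (simp add: matrix_vector_mult_scaleR power2_norm_eq_inner[symmetric]
        power2_eq_square)
  ultimately show ?thesis using nx by (simp add: divide_le_eq)
qed simp

lemma eq_zero_if_le_all_positive_multiples:
  fixes a C :: real
  assumes "0 \<le> a" and "\<And>t. t > 0 \<Longrightarrow> a \<le> t * C"
  shows "a = 0"
proof (rule ccontr)
  assume "a \<noteq> 0"
  then have a: "a > 0" using assms(1) by simp
  define t where "t = a / (\<bar>C\<bar> + 1)"
  have "t > 0" using a by (simp add: t_def)
  then have "a \<le> t * \<bar>C\<bar>" using assms(2)[of t] by (metis abs_ge_self mult_left_mono order_trans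
        less_imp_le)
  moreover have "t * \<bar>C\<bar> < a" using a by (simp add: t_def field_simps)
  ultimately show False by simp
qed

text \<open>The defect \<open>w = M v - (v \<bullet> M v) v\<close> lies in the subspace and is orthogonal to \<open>v\<close>, and
  comparing with \<open>v + t w\<close> yields \<open>2 \<parallel>w\<parallel>\<^sup>2 \<le> t C\<close> for all \<open>t > 0\<close>.\<close>

lemma quadratic_form_max_imp_eigenvector:
  fixes M :: "real^'n^'n"
  assumes sym: "transpose M = M" and sub: "subspace S"
    and inv: "\<And>x. x \<in> S \<Longrightarrow> M *v x \<in> S"
    and v: "v \<in> S" "norm v = 1"
    and max: "\<forall>x\<in>S. norm x = 1 \<longrightarrow> x \<bullet> (M *v x) \<le> v \<bullet> (M *v v)"
  shows "M *v v = (v \<bullet> (M *v v)) *\<^sub>R v"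
proof -
  define \<mu> where "\<mu> = v \<bullet> (M *v v)"
  define w where "w = M *v v - \<mu> *\<^sub>R v"
  define C where "C = \<mu> * (w \<bullet> w) - w \<bullet> (M *v w)"
  have wS: "w \<in> S" unfolding w_def using sub inv[OF v(1)] v(1)
    by (simp add: subspace_diff subspace_scale)
  have vv: "v \<bullet> v = 1" using v(2) by (simp add: norm_eq_1)
  have vw: "v \<bullet> w = 0" by (simp add: w_def inner_diff_right \<mu>_def vv)
  have wMv: "w \<bullet> (M *v v) = w \<bullet> w"
    using vw by (simp add: w_def inner_diff_right inner_commute)
  have vMw: "v \<bullet> (M *v w) = w \<bullet> w"
    using wMv symmetric_matrix_inner_commute[OF sym, of v w] by (simp add: inner_commute)
  have "2 * (w \<bullet> w) \<le> t * C" if "t > 0" for t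
  proof -
    define x where "x = v + t *\<^sub>R w"
    have "x \<in> S" unfolding x_def using sub v(1) wS by (simp add: subspace_add subspace_scale)
    then have "x \<bullet> (M *v x) \<le> \<mu> * (x \<bullet> x)"
      using quadratic_form_le_max_on_subspace[OF sub _ max] by (simp add: \<mu>_def)
    moreover have "x \<bullet> x = 1 + t\<^sup>2 * (w \<bullet> w)"
      unfolding x_def using vv vw
      by (simp add: inner_add_left inner_add_right inner_commute power2_eq_square)
    moreover have "x \<bullet> (M *v x) = \<mu> + 2 * t * (w \<bullet> w) + t\<^sup>2 * (w \<bullet> (M *v w))"
      unfolding x_def using wMv vMw
      by (simp add: matrix_vector_mult_scaleR matrix_vector_right_distrib inner_add_left
          inner_add_right \<mu>_def power2_eq_square algebra_simps)
    ultimately have "t * (2 * (w \<bullet> w)) \<le> t * (t * C)"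
      by (simp add: C_def power2_eq_square algebra_simps)
    then show ?thesis using that by simp
  qed
  then have "2 * (w \<bullet> w) = 0"
    by (intro eq_zero_if_le_all_positive_multiples) auto
  then show ?thesis by (simp add: w_def \<mu>_def)
qed

lemma symmetric_matrix_max_eigenvector:
  fixes M :: "real^'n^'n"
  assumes "transpose M = M" and "subspace S" and "x0 \<in> S" "x0 \<noteq> 0"
    and "\<And>x. x \<in> S \<Longrightarrow> M *v x \<in> S"
  obtains v where "v \<in> S" "norm v = 1" "M *v v = (v \<bullet> (M *v v)) *\<^sub>R v"
    "\<forall>x\<in>S. norm x = 1 \<longrightarrow> x \<bullet> (M *v x) \<le> v \<bullet> (M *v v)"
  using quadratic_form_attains_max_on_unit_sphere[OF assms(2-4), of M]
    quadratic_form_max_imp_eigenvector[OF assms(1,2,5)] by metis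

definition diag3 :: "real \<Rightarrow> real \<Rightarrow> real \<Rightarrow> real^3^3" where
  "diag3 a b c = (\<chi> i j. if i = j then (if i = 1 then a else if i = 2 then b else c) else 0)"

lemma diag3_simps [simp]:
  "diag3 a b c $ 1 $ 1 = a" "diag3 a b c $ 2 $ 2 = b" "diag3 a b c $ 3 $ 3 = c"
  "diag3 a b c $ 1 $ 2 = 0" "diag3 a b c $ 1 $ 3 = 0" "diag3 a b c $ 2 $ 1 = 0"
  "diag3 a b c $ 2 $ 3 = 0" "diag3 a b c $ 3 $ 1 = 0" "diag3 a b c $ 3 $ 2 = 0"
  by (simp_all add: diag3_def)

lemma diag3_zero: "diag3 0 0 0 = 0"
  unfolding vec_eq_iff forall_3 by simp

lemma mat_1_eq_diag3: "mat 1 = diag3 1 1 1"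
  unfolding vec_eq_iff forall_3 by (simp add: mat_def)

lemma transpose_diag3: "transpose (diag3 a b c) = diag3 a b c"
  unfolding vec_eq_iff forall_3 by (simp add: transpose_def)

lemma diag3_mult: "diag3 a b c ** diag3 p q r = diag3 (a * p) (b * q) (c * r)"
  unfolding vec_eq_iff forall_3 by (simp add: matrix_matrix_mult_def sum_3)

lemma matrix_mult_diag3_mult: "X ** diag3 a b c ** diag3 p q r = X ** diag3 (a * p) (b * q) (c * r)"
  by (simp add: diag3_mult flip: matrix_mul_assoc)

lemma det_diag3: "det (diag3 a b c) = a * b * c"
  by (simp add: det_3)

definition cols3 :: "real^3 \<Rightarrow> real^3 \<Rightarrow> real^3 \<Rightarrow> real^3^3" where
  "cols3 a b c = (\<chi> i j. (if j = 1 then a else if j = 2 then b else c) $ i)"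

lemma orthogonal_matrix_cols3:
  assumes "norm a = 1" "norm b = 1" "norm c = 1" "a \<bullet> b = 0" "a \<bullet> c = 0" "b \<bullet> c = 0"
  shows "orthogonal_matrix (cols3 a b c)"
proof -
  have "column 1 (cols3 a b c) = a" "column 2 (cols3 a b c) = b" "column 3 (cols3 a b c) = c"
    by (simp_all add: column_def cols3_def vec_eq_iff)
  then show ?thesis
    unfolding orthogonal_matrix_orthonormal_columns forall_3 orthogonal_def
    using assms by (simp add: inner_commute)
qed

lemma det_cols3_scaleR: "det (cols3 (e *\<^sub>R a) b c) = e * det (cols3 a b c)"
  by (simp add: det_3 cols3_def algebra_simps)

lemma matrix_mult_cols3: "A ** cols3 a b c = cols3 (A *v a) (A *v b) (A *v c)"
  unfolding vec_eq_iff forall_3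
  by (simp add: cols3_def matrix_matrix_mult_def matrix_vector_mult_def)

lemma cols3_mult_diag3: "cols3 a b c ** diag3 p q r = cols3 (p *\<^sub>R a) (q *\<^sub>R b) (r *\<^sub>R c)"
  unfolding vec_eq_iff forall_3 by (simp add: cols3_def matrix_matrix_mult_def sum_3)

lemma rotation_of_orthonormal_eigenvectors3:
  fixes M :: "real^3^3"
  assumes "norm v1 = 1" "norm v2 = 1" "norm v3 = 1"
    and "v1 \<bullet> v2 = 0" "v1 \<bullet> v3 = 0" "v2 \<bullet> v3 = 0"
    and Mv: "M *v v1 = m1 *\<^sub>R v1" "M *v v2 = m2 *\<^sub>R v2" "M *v v3 = m3 *\<^sub>R v3"
  obtains V where "orthogonal_matrix V" "det V = 1" "M ** V = V ** diag3 m1 m2 m3"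
proof -
  define e where "e = det (cols3 v1 v2 v3)"
  have "orthogonal_matrix (cols3 v1 v2 v3)"
    using assms by (intro orthogonal_matrix_cols3)
  then have e: "e = 1 \<or> e = -1" using det_orthogonal_matrix e_def by blast
  define V where "V = cols3 (e *\<^sub>R v1) v2 v3"
  have "orthogonal_matrix V" unfolding V_def
    using assms e by (intro orthogonal_matrix_cols3) auto
  moreover have "det V = 1" unfolding V_def det_cols3_scaleR using e e_def by auto
  moreover have "M ** V = V ** diag3 m1 m2 m3"
    unfolding V_def matrix_mult_cols3 cols3_mult_diag3
    by (simp add: matrix_vector_mult_scaleR Mv mult.commute)
  ultimately show thesis using that by blast
qed

text \<open>The eigenvectors for the largest, middle and smallest eigenvalue are obtained by
  maximising the Rayleigh quotient on the whole space, on the orthogonal complement of the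
  first, and on that of the first two.\<close>

lemma symmetric_matrix3_rotation_diagonalization:
  fixes M :: "real^3^3"
  assumes sym: "transpose M = M"
  obtains V m1 m2 m3 where "orthogonal_matrix V" "det V = 1" "m1 \<le> m2" "m2 \<le> m3"
    "M ** V = V ** diag3 m1 m2 m3"
proof -
  have "axis 1 1 \<noteq> (0::real^3)" by (simp add: axis_eq_0_iff)
  then obtain v3 where "v3 \<in> UNIV" "norm v3 = 1" "M *v v3 = (v3 \<bullet> (M *v v3)) *\<^sub>R v3"
    and max3: "\<forall>x\<in>UNIV. norm x = 1 \<longrightarrow> x \<bullet> (M *v x) \<le> v3 \<bullet> (M *v v3)"
    by (rule symmetric_matrix_max_eigenvector[OF sym subspace_UNIV UNIV_I]) blast+
  note v3 = this(2,3)
  define m3 where "m3 = v3 \<bullet> (M *v v3)"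
  have Mv3: "M *v v3 = m3 *\<^sub>R v3" using v3 m3_def by simp
  let ?S2 = "{x. v3 \<bullet> x = 0}"
  obtain y where "y \<noteq> 0" "orthogonal v3 y"
    using orthogonal_to_vector_exists[of v3] by auto
  then have "y \<in> ?S2" "y \<noteq> 0" by (auto simp: orthogonal_def)
  moreover have "M *v x \<in> ?S2" if "x \<in> ?S2" for x
    using that symmetric_matrix_inner_commute[OF sym, of v3 x] by (simp add: Mv3)
  ultimately obtain v2 where "v2 \<in> ?S2" "norm v2 = 1" "M *v v2 = (v2 \<bullet> (M *v v2)) *\<^sub>R v2"
    and max2: "\<forall>x\<in>?S2. norm x = 1 \<longrightarrow> x \<bullet> (M *v x) \<le> v2 \<bullet> (M *v v2)"
    by (rule symmetric_matrix_max_eigenvector[OF sym subspace_hyperplane]) blast+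
  note v2 = this(1-3)
  define m2 where "m2 = v2 \<bullet> (M *v v2)"
  have Mv2: "M *v v2 = m2 *\<^sub>R v2" using v2 m2_def by simp
  let ?S1 = "{x. v3 \<bullet> x = 0} \<inter> {x. v2 \<bullet> x = 0}"
  define z where "z = cross3 v3 v2"
  have "(norm z)\<^sup>2 + (v3 \<bullet> v2)\<^sup>2 = (norm v3 * norm v2)\<^sup>2"
    unfolding z_def by (rule norm_cross_dot)
  then have "norm z \<noteq> 0" using v2 v3 by auto
  then have "z \<in> ?S1" "z \<noteq> 0" unfolding z_def using dot_cross_self by auto
  moreover have "M *v x \<in> ?S1" if "x \<in> ?S1" for x
    using that symmetric_matrix_inner_commute[OF sym, of v3 x]
      symmetric_matrix_inner_commute[OF sym, of v2 x] by (simp add: Mv3 Mv2)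
  ultimately obtain v1 where "v1 \<in> ?S1" "norm v1 = 1" "M *v v1 = (v1 \<bullet> (M *v v1)) *\<^sub>R v1"
    by (rule symmetric_matrix_max_eigenvector[OF sym
          subspace_inter[OF subspace_hyperplane subspace_hyperplane]]) blast+
  then have v1: "v3 \<bullet> v1 = 0" "v2 \<bullet> v1 = 0" "norm v1 = 1"
    "M *v v1 = (v1 \<bullet> (M *v v1)) *\<^sub>R v1" by auto
  define m1 where "m1 = v1 \<bullet> (M *v v1)"
  have Mv1: "M *v v1 = m1 *\<^sub>R v1" using v1 m1_def by simp
  have "v1 \<bullet> v2 = 0" "v1 \<bullet> v3 = 0" "v2 \<bullet> v3 = 0"
    using v1 v2 by (auto simp: inner_commute)
  then obtain V where "orthogonal_matrix V" "det V = 1" "M ** V = V ** diag3 m1 m2 m3"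
    using rotation_of_orthonormal_eigenvectors3 v1(3) v2(2) v3(1) Mv1 Mv2 Mv3 by blast
  moreover have "m2 \<le> m3" using max3 v2(2) by (simp add: m2_def m3_def)
  moreover have "m1 \<le> m2" using max2 v1 by (simp add: m1_def m2_def)
  ultimately show thesis using that by blast
qed

lemma svd3_rotations:
  fixes A :: "real^3^3"
  assumes dA: "det A > 0"
  obtains U V s1 s2 s3 where "orthogonal_matrix U" "det U = 1" "orthogonal_matrix V" "det V = 1"
    "0 < s1" "s1 \<le> s2" "s2 \<le> s3" "A = U ** diag3 s1 s2 s3 ** transpose V"
proof -
  have "transpose (transpose A ** A) = transpose A ** A"
    by (simp add: matrix_transpose_mul)
  then obtain V m1 m2 m3 where oV: "orthogonal_matrix V" and dV: "det V = 1"
    and m: "m1 \<le> m2" "m2 \<le> m3" and MV: "transpose A ** A ** V = V ** diag3 m1 m2 m3"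
    by (rule symmetric_matrix3_rotation_diagonalization)
  have VtV: "transpose V ** V = mat 1" and VVt: "V ** transpose V = mat 1"
    using oV by (auto simp: orthogonal_matrix_def)
  define B where "B = A ** V"
  have "transpose B ** B = transpose V ** (transpose A ** A ** V)"
    by (simp add: B_def matrix_transpose_mul matrix_mul_assoc)
  also have "\<dots> = diag3 m1 m2 m3"
    by (simp add: MV matrix_mul_assoc VtV)
  finally have BtB: "transpose B ** B = diag3 m1 m2 m3" .
  have "m1 = column 1 B \<bullet> column 1 B"
    using arg_cong[OF BtB, of "\<lambda>X. X $ 1 $ 1"] by (simp add: matrix_mult_transpose_dot_column)
  then have m1_nonneg: "m1 \<ge> 0" by simp
  have "m1 * m2 * m3 = det A * det A"
    using arg_cong[OF BtB, of det] by (simp add: B_def det_mul det_transpose dV det_diag3)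
  then have "m1 * m2 * m3 > 0" using dA by simp
  then have m1_pos: "m1 > 0" using m1_nonneg m by (cases "m1 = 0") auto
  define s1 where "s1 = sqrt m1"
  define s2 where "s2 = sqrt m2"
  define s3 where "s3 = sqrt m3"
  have s: "0 < s1" "s1 \<le> s2" "s2 \<le> s3"
    using m1_pos m by (auto simp: s1_def s2_def s3_def)
  have sq: "s1 * s1 = m1" "s2 * s2 = m2" "s3 * s3 = m3"
    using m1_pos m by (auto simp: s1_def s2_def s3_def)
  define U where "U = B ** diag3 (1 / s1) (1 / s2) (1 / s3)"
  have "transpose U ** U = diag3 (1 / s1) (1 / s2) (1 / s3) ** (transpose B ** B) **
      diag3 (1 / s1) (1 / s2) (1 / s3)"
    unfolding U_def by (simp add: matrix_transpose_mul transpose_diag3 matrix_mul_assoc)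
  also have "\<dots> = mat 1"
    using s by (simp add: BtB diag3_mult sq[symmetric] mat_1_eq_diag3)
  finally have oU: "orthogonal_matrix U" by (simp add: orthogonal_matrix)
  have "A = B ** transpose V"
    by (simp add: B_def VVt flip: matrix_mul_assoc)
  also have "\<dots> = U ** diag3 s1 s2 s3 ** transpose V"
    using s by (simp add: U_def matrix_mult_diag3_mult mat_1_eq_diag3[symmetric])
  finally have A: "A = U ** diag3 s1 s2 s3 ** transpose V" .
  have "0 < det U * (s1 * s2 * s3)"
    using dA arg_cong[OF A, of det] by (simp add: det_mul det_transpose dV det_diag3)
  moreover have "0 < s1 * s2 * s3" using s by simp
  ultimately have "det U > 0" using zero_less_mult_pos2 by blast
  then have "det U = 1" using det_orthogonal_matrix[OF oU] by auto
  then show thesis using that oU oV dV s A by blast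
qed

lemma sorted_cubic_roots_unique:
  fixes a1 a2 a3 b1 b2 b3 :: real
  assumes H: "\<And>t. (t - a1) * (t - a2) * (t - a3) = (t - b1) * (t - b2) * (t - b3)"
    and "a1 \<le> a2" "a2 \<le> a3" "b1 \<le> b2" "b2 \<le> b3"
  shows "a1 = b1 \<and> a2 = b2 \<and> a3 = b3"
proof -
  have A1: "a1 = b1 \<or> a1 = b2 \<or> a1 = b3" and A3: "a3 = b1 \<or> a3 = b2 \<or> a3 = b3"
    using H[of a1] H[of a3] by auto
  have B1: "b1 = a1 \<or> b1 = a2 \<or> b1 = a3" and B3: "b3 = a1 \<or> b3 = a2 \<or> b3 = a3"
    using H[of b1] H[of b3] by auto
  have a1: "a1 = b1" using A1 B1 assms(2-5) by linarith
  have a3: "a3 = b3" using A3 B3 assms(2-5) by linarith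
  have "(a3 + 1 - a1) * (a3 + 1 - a2) = (a3 + 1 - a1) * (a3 + 1 - b2)"
    using H[of "a3 + 1"] by (simp add: a1 a3)
  moreover have "a3 + 1 - a1 \<noteq> 0" using assms(2,3) by linarith
  ultimately show ?thesis using a1 a3 by simp
qed

lemma det_orthogonal_conj:
  fixes V X :: "real^'n^'n"
  assumes "orthogonal_matrix V"
  shows "det (V ** X ** transpose V) = det X"
  using det_orthogonal_matrix[OF assms] by (auto simp: det_mul det_transpose)

lemma orthogonal_conj_diag3_diff:
  fixes V :: "real^3^3"
  assumes "orthogonal_matrix V"
  shows "V ** diag3 (t - a) (t - b) (t - c) ** transpose V
     = t *\<^sub>R mat 1 - V ** diag3 a b c ** transpose V"
proof -
  have "V ** diag3 (t - a) (t - b) (t - c) ** transpose V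
     = t *\<^sub>R (V ** transpose V) - V ** diag3 a b c ** transpose V"
    unfolding vec_eq_iff forall_3
    by (simp add: matrix_matrix_mult_def sum_3 transpose_def algebra_simps)
  with assms show ?thesis by (simp add: orthogonal_matrix_def)
qed

lemma singular_values3_eq_svd_diagonal:
  fixes A U V :: "real^3^3"
  assumes oU: "orthogonal_matrix U" and oV: "orthogonal_matrix V"
    and A: "A = U ** diag3 s1 s2 s3 ** transpose V"
    and s: "0 \<le> s1" "s1 \<le> s2" "s2 \<le> s3"
    and l: "singular_values3 A l1 l2 l3" "l1 \<le> l2" "l2 \<le> l3"
  shows "s1 = l1 \<and> s2 = l2 \<and> s3 = l3"
proof -
  have "transpose A ** A = V ** diag3 s1 s2 s3 ** (transpose U ** U) ** diag3 s1 s2 s3 **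
      transpose V"
    unfolding A by (simp add: matrix_transpose_mul transpose_diag3 matrix_mul_assoc)
  also have "\<dots> = V ** diag3 (s1\<^sup>2) (s2\<^sup>2) (s3\<^sup>2) ** transpose V"
    using oU by (simp add: orthogonal_matrix_def matrix_mult_diag3_mult power2_eq_square matrix_mul_assoc)
  finally have AtA: "transpose A ** A = \<dots>" .
  have "(t - s1\<^sup>2) * (t - s2\<^sup>2) * (t - s3\<^sup>2) = (t - l1\<^sup>2) * (t - l2\<^sup>2) * (t - l3\<^sup>2)" for t
    using l(1) det_orthogonal_conj[OF oV, of "diag3 (t - s1\<^sup>2) (t - s2\<^sup>2) (t - s3\<^sup>2)"]
    unfolding singular_values3_def orthogonal_conj_diag3_diff[OF oV] AtA[symmetric]
    by (simp add: det_diag3)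
  moreover have "s1\<^sup>2 \<le> s2\<^sup>2" "s2\<^sup>2 \<le> s3\<^sup>2" using s by (auto intro: power_mono)
  moreover have "0 \<le> l1" using l(1) by (simp add: singular_values3_def)
  then have "l1\<^sup>2 \<le> l2\<^sup>2" "l2\<^sup>2 \<le> l3\<^sup>2" using l(2,3) by (auto intro: power_mono)
  ultimately have "s1\<^sup>2 = l1\<^sup>2 \<and> s2\<^sup>2 = l2\<^sup>2 \<and> s3\<^sup>2 = l3\<^sup>2"
    using sorted_cubic_roots_unique by blast
  then show ?thesis using s l(1) by (simp add: singular_values3_def power2_eq_iff_nonneg)
qed

lemma transpose_mult_cof3: "transpose X ** cof X = det X *\<^sub>R mat 1" for X :: "real^3^3"
  unfolding vec_eq_iff forall_3
  by (simp add: cof_def matrix_matrix_mult_def sum_3 det_3 mat_def transpose_def algebra_simps)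

lemma matrix_mult_left_cancel:
  fixes X :: "'a::field^'n^'n" and Y Z :: "'a^'m^'n"
  assumes "invertible X" and "X ** Y = X ** Z"
  shows "Y = Z"
proof -
  obtain B where B: "B ** X = mat 1" using assms(1) invertible_left_inverse by blast
  have "Y = B ** (X ** Y)" by (simp add: B matrix_mul_assoc)
  also have "\<dots> = Z" by (simp add: assms(2) B matrix_mul_assoc)
  finally show ?thesis .
qed

lemma cof_svd3:
  fixes U V :: "real^3^3"
  assumes oU: "orthogonal_matrix U" and dU: "det U = 1"
    and oV: "orthogonal_matrix V" and dV: "det V = 1" and abc: "a * b * c \<noteq> 0"
  shows "cof (U ** diag3 a b c ** transpose V) = U ** diag3 (b * c) (a * c) (a * b) ** transpose V"
    (is "cof ?A = ?C")
proof -
  have dA: "det ?A = a * b * c" by (simp add: det_mul det_transpose dU dV det_diag3)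
  have "transpose ?A ** ?C = V ** (diag3 a b c ** (transpose U ** U) ** diag3 (b * c) (a * c) (a * b))
      ** transpose V"
    by (simp add: matrix_transpose_mul transpose_diag3 matrix_mul_assoc)
  also have "\<dots> = V ** diag3 (a * b * c) (a * b * c) (a * b * c) ** transpose V"
    using oU by (simp add: orthogonal_matrix_def diag3_mult mult_ac)
  also have "\<dots> = det ?A *\<^sub>R mat 1"
    unfolding dA using orthogonal_conj_diag3_diff[OF oV, of "a * b * c" 0 0 0] by (simp add: diag3_zero)
  finally have "transpose ?A ** cof ?A = transpose ?A ** ?C"
    by (simp only: transpose_mult_cof3)
  moreover have "invertible (transpose ?A)"
    using abc dA by (simp add: invertible_det_nz det_transpose)
  ultimately show ?thesis using matrix_mult_left_cancel by blast
qed

lemma trace_svd3: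
  fixes U V :: "real^3^3"
  shows "trace (U ** diag3 a b c ** transpose V) =
    a * (transpose V ** U) $ 1 $ 1 + b * (transpose V ** U) $ 2 $ 2 + c * (transpose V ** U) $ 3 $ 3"
  by (simp add: trace_def matrix_matrix_mult_def sum_3 transpose_def algebra_simps)

theorem lemma4p1:
  fixes lam l1 l2 l3 :: real and A :: "real^3^3"
  assumes "lam > 0"
    and "det A > 0"
    and "singular_values3 A l1 l2 l3"
    and "l1 \<le> l2" and "l2 \<le> l3"
  shows "\<exists>R :: real^3^3. orthogonal_matrix R \<and> det R = 1 \<and>
           Gfun lam A l1 l2 l3 =
             (1 - R $ 1 $ 1) * (l2 * l3 - lam * l1)
           + (1 - R $ 2 $ 2) * (l1 * l3 - lam * l2)
           + (1 - R $ 3 $ 3) * (l1 * l2 - lam * l3)"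
proof -
  obtain U V s1 s2 s3 where oU: "orthogonal_matrix U" and dU: "det U = 1"
    and oV: "orthogonal_matrix V" and dV: "det V = 1"
    and s: "0 < s1" "s1 \<le> s2" "s2 \<le> s3" and A_svd: "A = U ** diag3 s1 s2 s3 ** transpose V"
    using svd3_rotations[OF assms(2)] by blast
  have "s1 = l1" "s2 = l2" "s3 = l3"
    using singular_values3_eq_svd_diagonal[OF oU oV A_svd _ s(2,3) assms(3-5)] s(1) by auto
  with s A_svd have A: "A = U ** diag3 l1 l2 l3 ** transpose V" and "l1 * l2 * l3 \<noteq> 0" by auto
  then have cofA: "cof A = U ** diag3 (l2 * l3) (l1 * l3) (l1 * l2) ** transpose V"
    using cof_svd3[OF oU dU oV dV] by simp
  define R where "R = transpose V ** U"
  have trA: "trace A = l1 * R $ 1 $ 1 + l2 * R $ 2 $ 2 + l3 * R $ 3 $ 3"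
    unfolding A trace_svd3 R_def ..
  have trC: "trace (cof A) = (l2 * l3) * R $ 1 $ 1 + (l1 * l3) * R $ 2 $ 2 + (l1 * l2) * R $ 3 $ 3"
    unfolding cofA trace_svd3 R_def ..
  show ?thesis
  proof (intro exI conjI)
    show "orthogonal_matrix R" unfolding R_def using oU oV by (simp add: orthogonal_matrix_mul)
    show "det R = 1" unfolding R_def by (simp add: det_mul det_transpose dU dV)
    show "Gfun lam A l1 l2 l3 = (1 - R $ 1 $ 1) * (l2 * l3 - lam * l1)
        + (1 - R $ 2 $ 2) * (l1 * l3 - lam * l2) + (1 - R $ 3 $ 3) * (l1 * l2 - lam * l3)"
      unfolding Gfun_def Pfun_def Nfun_def trA trC by (simp add: algebra_simps)
  qed
qed

end
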